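(* Let $\mathbf K$ be a commutative field, $p,q\in\mathbb N$, and let $A_1,\dots,A_d\in\mathrm{Rec}_{p\times q}(\mathbf K)$ span a recursively closed subspace $\mathcal A=\sum_{j=1}^d\mathbf K A_j$, with saturation level $N$ (which satisfies $N\le\dim(\mathcal A)-1<d$). Then $A_1,\dots,A_d$ are linearly independent if and only if their restrictions $A_1[\mathcal M_{p\times q}^{\le N}],\dots,A_d[\mathcal M_{p\times q}^{\le N}]\in\mathbf K^{\mathcal M_{p\times q}^{\le N}}$ are linearly independent.
   Context: For $p,q,l\in\mathbb N$, $\mathcal M_{p\times q}^l$ is the set of pairs $(U,W)$ of words of common length $l$ with $U\in\{0,\dots,p-1\}^l$, $W\in\{0,\dots,q-1\}^l$; $\mathcal M_{p\times q}=\bigcup_l\mathcal M_{p\times q}^l$ and $\mathcal M_{p\times q}^{\le l}$ is the set of words of length at most $l$. $\mathbf K^{\mathcal M_{p\times q}}$ is the space of functions $\mathcal M_{p\times q}\to\mathbf K$, values written $A[U,W]$; $A[\mathcal S]$ is the restriction of $A$ to a subset $\mathcal S$. Shift maps: $(\rho(S,T)A)[U,W]=A[US,WT]$; a subspace is recursively closed if invariant under all shift maps; $\mathrm{Rec}_{p\times q}(\mathbf K)$ is the set of $A$ whose span of $\{\rho(S,T)A\}$ is finite-dimensional. For a subspace $\mathcal A$, $\mathcal A[\mathcal M_{p\times q}^{\le l}]$ is its image under restriction to $\mathcal M_{p\times q}^{\le l}$; the saturation level of a non-zero $\mathcal A$ is the smallest $N\ge0$ such that the projection $\mathcal A[\mathcal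 M_{p\times q}^{\le N+1}]\to\mathcal A[\mathcal M_{p\times q}^{\le N}]$ is an isomorphism ($\infty$ if none), and the zero space has saturation level $-1$. *)

theory Defs
  imports Main
begin

text \<open>A series is any function on pairs of lists; only its values on
  the word set matter (all notions below only look at values on words).\<close>

definition words :: "nat \<Rightarrow> nat \<Rightarrow> (nat list \<times> nat list) set" where
  "words p q = {(U, W). length U = length W \<and> set U \<subseteq> {..<p} \<and> set W \<subseteq> {..<q}}"

text \<open>Words of length at most l (l an integer; for l = -1 this is empty).\<close>
definition words_le :: "nat \<Rightarrow> nat \<Rightarrow> int \<Rightarrow> (nat list \<times> nat list) set" where
  "words_le p q l = {(U, W) \<in> words p q. int (length U) \<le> l}"

definition shift :: "nat list \<Rightarrow> nat list \<Rightarrow> (nat list \<times> nat list \<Rightarrow> 'k) \<Rightarrow> (nat list \<times> nat list \<Rightarrow> 'k)" where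
  "shift S T A = (\<lambda>(U, W). A (U @ S, W @ T))"

definition restr :: "(nat list \<times> nat list) set \<Rightarrow> (nat list \<times> nat list \<Rightarrow> 'k::zero) \<Rightarrow> (nat list \<times> nat list \<Rightarrow> 'k)" where
  "restr S f = (\<lambda>x. if x \<in> S then f x else 0)"

definition lin_indep_on :: "(nat list \<times> nat list) set \<Rightarrow> nat \<Rightarrow> (nat \<Rightarrow> nat list \<times> nat list \<Rightarrow> 'k::field) \<Rightarrow> bool" where
  "lin_indep_on S d B \<longleftrightarrow>
     (\<forall>c. (\<forall>x\<in>S. (\<Sum>j<d. c j * B j x) = 0) \<longrightarrow> (\<forall>j<d. c j = 0))"

definition span_fam :: "nat \<Rightarrow> nat \<Rightarrow> nat \<Rightarrow> (nat \<Rightarrow> nat list \<times> nat list \<Rightarrow> 'k::field) \<Rightarrow> (nat list \<times> nat list \<Rightarrow> 'k) set" where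
  "span_fam p q d A = {restr (words p q) (\<lambda>x. \<Sum>j<d. c j * A j x) | c. True}"

text \<open>Rec: the span of all shifts of A is finite dimensional, i.e. contained in the span of
  finitely many series.\<close>
definition Rec :: "nat \<Rightarrow> nat \<Rightarrow> (nat list \<times> nat list \<Rightarrow> 'k::field) \<Rightarrow> bool" where
  "Rec p q A \<longleftrightarrow> (\<exists>n B. \<forall>(S, T) \<in> words p q. restr (words p q) (shift S T A) \<in> span_fam p q n B)"

definition rec_closed :: "nat \<Rightarrow> nat \<Rightarrow> nat \<Rightarrow> (nat \<Rightarrow> nat list \<times> nat list \<Rightarrow> 'k::field) \<Rightarrow> bool" where
  "rec_closed p q d A \<longleftrightarrow>
     (\<forall>(S, T) \<in> words p q. \<forall>f \<in> span_fam p q d A. restr (words p q) (shift S T f) \<in> span_fam p q d A)"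

definition proj_iso :: "nat \<Rightarrow> nat \<Rightarrow> nat \<Rightarrow> (nat \<Rightarrow> nat list \<times> nat list \<Rightarrow> 'k::field) \<Rightarrow> nat \<Rightarrow> bool" where
  "proj_iso p q d A l \<longleftrightarrow>
     bij_betw (restr (words_le p q (int l)))
       (restr (words_le p q (int l + 1)) ` span_fam p q d A)
       (restr (words_le p q (int l)) ` span_fam p q d A)"

text \<open>Saturation level (an integer; -1 for the zero space).  No finite value is assigned
  when no level saturates (the infinite case).\<close>
definition is_saturation_level :: "nat \<Rightarrow> nat \<Rightarrow> nat \<Rightarrow> (nat \<Rightarrow> nat list \<times> nat list \<Rightarrow> 'k::field) \<Rightarrow> int \<Rightarrow> bool" where
  "is_saturation_level p q d A N \<longleftrightarrow>
     (if span_fam p q d A \<subseteq> {\<lambda>x. 0} then N = -1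
      else N \<ge> 0 \<and> proj_iso p q d A (nat N) \<and> (\<forall>n < nat N. \<not> proj_iso p q d A n))"

end

theory Submission
  imports Defs
begin

text \<open>If a series h of the span vanishes on the words of length at most N, it also vanishes
  on those of length N + 1, because the projection at the saturation level is injective.
  Shifting h by one letter stays in the span (recursive closedness) and again vanishes up to
  length N, so induction on the word length shows that h vanishes on all words.  Hence a
  linear relation among the restrictions to length at most N is a relation among the
  series themselves.\<close>

lemma restr_lin_comb_mem_span_fam:
  "restr (words p q) (\<lambda>x. \<Sum>j<d. c j * A j x) \<in> span_fam p q d A"
  unfolding span_fam_def by blast

lemma zero_mem_span_fam: "(\<lambda>x. 0) \<in> span_fam p q d A"
  using restr_lin_comb_mem_span_fam[of p q "\<lambda>_. 0" A d] by (simp add: restr_def)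

lemma words_le_subset_words: "words_le p q l \<subseteq> words p q"
  unfolding words_le_def by auto

lemma words_snoc_letter_cases:
  assumes "(U, W) \<in> words p q" and "length U = Suc m"
  obtains U' W' s t where "U = U' @ [s]" "W = W' @ [t]"
    "(U', W') \<in> words p q" "([s], [t]) \<in> words p q" "length U' = m"
proof -
  have "length W = Suc m"
    using assms unfolding words_def by simp
  then obtain W' t where W: "W = W' @ [t]"
    by (metis length_Suc_conv_rev)
  obtain U' s where U: "U = U' @ [s]"
    using assms(2) by (metis length_Suc_conv_rev)
  show thesis
    using assms by (intro that[OF U W]) (auto simp: U W words_def)
qed

lemma words_le_append_letter:
  assumes "(U, W) \<in> words_le p q l" and "([s], [t]) \<in> words p q"
  shows "(U @ [s], W @ [t]) \<in> words_le p q (l + 1)"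
  using assms unfolding words_le_def words_def by auto

lemma lin_indep_on_transfer:
  assumes "\<And>c. \<forall>x\<in>S. (\<Sum>j<d. c j * B j x) = 0 \<Longrightarrow> \<forall>x\<in>T. (\<Sum>j<d. c j * B j x) = 0"
    and "lin_indep_on T d B"
  shows "lin_indep_on S d B"
  using assms unfolding lin_indep_on_def by blast

lemma proj_iso_vanishing_extends:
  assumes iso: "proj_iso p q d A n" and h: "h \<in> span_fam p q d A"
    and vanish: "\<forall>x\<in>words_le p q (int n). h x = 0"
  shows "\<forall>x\<in>words_le p q (int n + 1). h x = 0"
proof -
  let ?R = "restr (words_le p q (int n + 1))" and ?r = "restr (words_le p q (int n))"
  have "?r (?R h) = ?r (?R (\<lambda>x. 0))"
    using vanish unfolding restr_def words_le_def by auto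
  moreover have "inj_on ?r (?R ` span_fam p q d A)"
    using iso unfolding proj_iso_def bij_betw_def by blast
  ultimately have eq: "?R h = ?R (\<lambda>x. 0)"
    using h zero_mem_span_fam by (blast dest: inj_onD)
  show ?thesis
  proof
    fix x assume "x \<in> words_le p q (int n + 1)"
    then show "h x = 0"
      using fun_cong[OF eq, of x] by (simp add: restr_def)
  qed
qed

lemma rec_closed_vanishing_on_words:
  assumes rc: "rec_closed p q d A" and iso: "proj_iso p q d A n"
    and h: "h \<in> span_fam p q d A" and vanish: "\<forall>x\<in>words_le p q (int n). h x = 0"
    and UW: "(U, W) \<in> words p q"
  shows "h (U, W) = 0"
  using h vanish UW
proof (induction "length U" arbitrary: h U W)
  case 0
  then have "(U, W) \<in> words_le p q (int n)"
    unfolding words_le_def by simp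
  with 0 show ?case by blast
next
  case (Suc m)
  obtain U' W' s t where UW: "U = U' @ [s]" "W = W' @ [t]" and
    UW': "(U', W') \<in> words p q" and st: "([s], [t]) \<in> words p q" and m: "length U' = m"
    using words_snoc_letter_cases[OF Suc.prems(3) Suc.hyps(2)[symmetric]] .
  define g where "g = restr (words p q) (shift [s] [t] h)"
  have g: "g \<in> span_fam p q d A"
    using rc st Suc.prems(1) unfolding rec_closed_def g_def by blast
  have "\<forall>x\<in>words_le p q (int n + 1). h x = 0"
    using proj_iso_vanishing_extends[OF iso Suc.prems(1,2)] .
  then have "\<forall>x\<in>words_le p q (int n). g x = 0"
    using words_le_append_letter[OF _ st] words_le_subset_words
    unfolding g_def restr_def shift_def by fastforce
  then have "g (U', W') = 0"
    using Suc.hyps(1)[OF m[symmetric] g _ UW'] by blast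
  then show ?case
    using UW' unfolding g_def restr_def shift_def UW by simp
qed

lemma saturation_level_vanishing_on_words:
  assumes "rec_closed p q d A" and sat: "is_saturation_level p q d A N"
    and h: "h \<in> span_fam p q d A" and vanish: "\<forall>x\<in>words_le p q N. h x = 0"
  shows "\<forall>x\<in>words p q. h x = 0"
proof (cases "span_fam p q d A \<subseteq> {\<lambda>x. 0}")
  case True
  then show ?thesis using h by auto
next
  case False
  then have "N \<ge> 0" and iso: "proj_iso p q d A (nat N)"
    using sat unfolding is_saturation_level_def by auto
  then show ?thesis
    using rec_closed_vanishing_on_words[OF assms(1) iso h] vanish by auto
qed

theorem mainTheorem5:
  fixes p q d :: nat and A :: "nat \<Rightarrow> nat list \<times> nat list \<Rightarrow> 'k::field" and N :: int
  assumes "\<forall>j<d. Rec p q (A j)"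
    and "rec_closed p q d A"
    and "is_saturation_level p q d A N"
  shows "lin_indep_on (words p q) d A \<longleftrightarrow> lin_indep_on (words_le p q N) d A"
proof
  show "lin_indep_on (words_le p q N) d A" if "lin_indep_on (words p q) d A"
  proof (rule lin_indep_on_transfer[OF _ that])
    fix c
    let ?h = "restr (words p q) (\<lambda>x. \<Sum>j<d. c j * A j x)"
    assume "\<forall>x\<in>words_le p q N. (\<Sum>j<d. c j * A j x) = 0"
    then have "\<forall>x\<in>words_le p q N. ?h x = 0"
      using words_le_subset_words unfolding restr_def by auto
    then have "\<forall>x\<in>words p q. ?h x = 0"
      by (rule saturation_level_vanishing_on_words[OF assms(2,3) restr_lin_comb_mem_span_fam])
    then show "\<forall>x\<in>words p q. (\<Sum>j<d. c j * A j x) = 0"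
      unfolding restr_def by auto
  qed
  show "lin_indep_on (words p q) d A" if "lin_indep_on (words_le p q N) d A"
    using words_le_subset_words by (intro lin_indep_on_transfer[OF _ that]) blast
qed

end
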